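(* Let $\Theta=(\alpha,\rho_r,\rho_d,\rho_s,\rho_0,T)$ with $\alpha>1$, $\rho_r,\rho_d,\rho_s,\rho_0>0$, $T>1$, such that $K_{max}(\Theta):=\min\big(\frac T4,\frac{\rho_r}{3\rho_0},\frac{3\rho_d}{2\rho_0}\big)>10$. Then for every $R>0$, $\zeta'_{zf}(R,\Theta)<\zeta'_{csi}(R,\Theta)$.
   Context: For reals $M>K$, $1\le K\le\tau<T$, $$\gamma_u=\frac{K+\tau}{2\tau(M-K)}\Big(2^{\frac{R}{K(1-\tau/T)}}-1\Big)+\sqrt{\Big(\frac{K+\tau}{2\tau(M-K)}\Big(2^{\frac{R}{K(1-\tau/T)}}-1\Big)\Big)^2+\frac{2^{\frac{R}{K(1-\tau/T)}}-1}{\tau(M-K)}},$$ $$\frac{R}{\zeta_{zf}(M,K,\tau,R,\Theta)}=\alpha K\gamma_u+\rho_s+K\Big(\rho_d+\frac{8K^2\rho_0}{3T}\Big)+M\Big(\rho_r+2K\rho_0+\frac{4K^2\rho_0}{T}\Big).$$ $\zeta'_{zf}(R,\Theta)$ is the supremum of $\zeta_{zf}$ over real $(M,K,\tau)$ with $1\le K\le K_{max}(\Theta)$, $K\le\tau<T$, $M>K$. For real $M>K\ge1$, $\frac{1}{\zeta_{csi}(M,K,R,\Theta)}=\frac1R\big[\frac{\alpha K}{M-K}(2^{R/K}-1)+M\rho_r+K\rho_d+\rho_s\big]$ and $\zeta'_{csi}(R,\Theta)$ is its maximum over real $(M,K)$ with $1\le K\le K_{max}(\Theta)$, $M>K$.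 *)

theory Defs
  imports Complex_Main
begin

definition K_max :: "real \<Rightarrow> real \<Rightarrow> real \<Rightarrow> real \<Rightarrow> real" where
  "K_max T rho_r rho_d rho_0 = min (T / 4) (min (rho_r / (3 * rho_0)) (3 * rho_d / (2 * rho_0)))"

definition gamma_u :: "real \<Rightarrow> real \<Rightarrow> real \<Rightarrow> real \<Rightarrow> real \<Rightarrow> real" where
  "gamma_u M K tau R T =
    (let e = 2 powr (R / (K * (1 - tau / T))) - 1;
         c = (K + tau) / (2 * tau * (M - K)) * e
     in c + sqrt (c\<^sup>2 + e / (tau * (M - K))))"

definition zeta_zf :: "real \<Rightarrow> real \<Rightarrow> real \<Rightarrow> real \<Rightarrow> real \<Rightarrow> real \<Rightarrow> real \<Rightarrow> real \<Rightarrow> real \<Rightarrow> real \<Rightarrow> real" where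
  "zeta_zf M K tau R alpha rho_r rho_d rho_s rho_0 T =
    R / (alpha * K * gamma_u M K tau R T + rho_s + K * (rho_d + 8 * K\<^sup>2 * rho_0 / (3 * T))
         + M * (rho_r + 2 * K * rho_0 + 4 * K\<^sup>2 * rho_0 / T))"

definition zeta'_zf :: "real \<Rightarrow> real \<Rightarrow> real \<Rightarrow> real \<Rightarrow> real \<Rightarrow> real \<Rightarrow> real \<Rightarrow> real" where
  "zeta'_zf R alpha rho_r rho_d rho_s rho_0 T =
    Sup {zeta_zf M K tau R alpha rho_r rho_d rho_s rho_0 T | M K tau.
           1 \<le> K \<and> K \<le> K_max T rho_r rho_d rho_0 \<and> K \<le> tau \<and> tau < T \<and> M > K}"

definition zeta_csi :: "real \<Rightarrow> real \<Rightarrow> real \<Rightarrow> real \<Rightarrow> real \<Rightarrow> real \<Rightarrow> real \<Rightarrow> real" where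
  "zeta_csi M K R alpha rho_r rho_d rho_s =
    1 / ((1 / R) * (alpha * K / (M - K) * (2 powr (R / K) - 1) + M * rho_r + K * rho_d + rho_s))"

definition zeta'_csi :: "real \<Rightarrow> real \<Rightarrow> real \<Rightarrow> real \<Rightarrow> real \<Rightarrow> real \<Rightarrow> real \<Rightarrow> real" where
  "zeta'_csi R alpha rho_r rho_d rho_s rho_0 T =
    Sup {zeta_csi M K R alpha rho_r rho_d rho_s | M K.
           1 \<le> K \<and> K \<le> K_max T rho_r rho_d rho_0 \<and> M > K}"

end

theory Submission
  imports Defs
begin

text \<open>Write \<open>P\<close> for the power \<open>R / \<zeta>\<^sub>c\<^sub>s\<^sub>i\<close> of a feasible pair \<open>(M, K)\<close>. Since
  \<open>\<gamma>\<^sub>u \<ge> 2 c \<ge> (2\<^bsup>R/K\<^esup> - 1)/(M - K)\<close> and \<open>M K \<ge> 1\<close>, the power \<open>R / \<zeta>\<^sub>z\<^sub>f\<close> of any feasible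
  \<open>(M, K, \<tau>)\<close> exceeds \<open>P\<close> by at least \<open>2 \<rho>\<^sub>0\<close>. With \<open>b = R / P \<le> \<zeta>'\<^sub>c\<^sub>s\<^sub>i\<close> this reads
  \<open>\<zeta>\<^sub>z\<^sub>f \<le> b / (1 + c b)\<close> for \<open>c = 2 \<rho>\<^sub>0 / R\<close>, and as \<open>x \<mapsto> x / (1 + c x)\<close> is increasing, the
  supremum of the left side is at most \<open>\<zeta>'\<^sub>c\<^sub>s\<^sub>i / (1 + c \<zeta>'\<^sub>c\<^sub>s\<^sub>i) < \<zeta>'\<^sub>c\<^sub>s\<^sub>i\<close>.
  The bound on \<open>K\<^sub>m\<^sub>a\<^sub>x\<close> is only needed to make the feasible sets nonempty.\<close>

lemma Sup_less_Sup_if_dominated: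
  fixes A B :: "real set" and c :: real
  assumes "A \<noteq> {}" "bdd_above B" "c > 0"
    and dominated: "\<And>a. a \<in> A \<Longrightarrow> \<exists>b\<in>B. b > 0 \<and> a \<le> b / (1 + c * b)"
  shows "Sup A < Sup B"
proof -
  obtain a where "a \<in> A" using assms(1) by blast
  then obtain b0 where "b0 \<in> B" "b0 > 0" using dominated by blast
  then have S_pos: "Sup B > 0" using cSup_upper[OF _ assms(2)] by fastforce
  have "a \<le> Sup B / (1 + c * Sup B)" if a: "a \<in> A" for a
  proof -
    obtain b where b: "b \<in> B" "b > 0" "a \<le> b / (1 + c * b)" using dominated[OF a] by blast
    have "b \<le> Sup B" using cSup_upper[OF b(1) assms(2)] .
    then have "b * (1 + c * Sup B) \<le> Sup B * (1 + c * b)" by (simp add: algebra_simps)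
    then have "b / (1 + c * b) \<le> Sup B / (1 + c * Sup B)"
      using b(2) S_pos assms(3) by (simp add: divide_simps add_pos_pos)
    with b(3) show ?thesis by linarith
  qed
  then have "Sup A \<le> Sup B / (1 + c * Sup B)" by (rule cSup_least[OF assms(1)])
  also have "\<dots> < Sup B" using S_pos assms(3) by (simp add: divide_simps add_pos_pos)
  finally show ?thesis .
qed

definition csi_power :: "real \<Rightarrow> real \<Rightarrow> real \<Rightarrow> real \<Rightarrow> real \<Rightarrow> real \<Rightarrow> real \<Rightarrow> real" where
  "csi_power M K R alpha rho_r rho_d rho_s =
     alpha * K / (M - K) * (2 powr (R / K) - 1) + M * rho_r + K * rho_d + rho_s"

lemma zeta_csi_eq_divide_csi_power:
  "zeta_csi M K R alpha rho_r rho_d rho_s = R / csi_power M K R alpha rho_r rho_d rho_s"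
  unfolding zeta_csi_def csi_power_def by simp

lemma csi_power_ge_rho_s:
  assumes "0 < K" "K < M" "0 \<le> R" "0 \<le> alpha" "0 \<le> rho_r" "0 \<le> rho_d"
  shows "rho_s \<le> csi_power M K R alpha rho_r rho_d rho_s"
proof -
  have "1 \<le> 2 powr (R / K)" using assms by (intro ge_one_powr_ge_zero) simp_all
  then have "0 \<le> alpha * K / (M - K) * (2 powr (R / K) - 1)" using assms by simp
  moreover have "0 \<le> M * rho_r" "0 \<le> K * rho_d" using assms by simp_all
  ultimately show ?thesis unfolding csi_power_def by linarith
qed

lemma gamma_u_ge:
  assumes "0 < K" "K \<le> tau" "tau < T" "K < M" "0 \<le> R"
  shows "(2 powr (R / K) - 1) / (M - K) \<le> gamma_u M K tau R T"
proof -
  define e where "e = 2 powr (R / (K * (1 - tau / T))) - 1"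
  define c where "c = (K + tau) / (2 * tau * (M - K)) * e"
  have pos: "0 < tau" "0 < M - K" "0 < 1 - tau / T" "1 - tau / T \<le> 1" using assms by auto
  have "R / K \<le> R / (K * (1 - tau / T))"
    using pos assms by (simp add: divide_left_mono mult_le_cancel_left1)
  then have e_ge: "2 powr (R / K) - 1 \<le> e" unfolding e_def by simp
  have "1 \<le> 2 powr (R / K)" using assms by (intro ge_one_powr_ge_zero) simp_all
  then have e_nonneg: "0 \<le> e" using e_ge by linarith
  have "c \<ge> 0" unfolding c_def using pos e_nonneg assms by simp
  moreover have "sqrt (c\<^sup>2) \<le> sqrt (c\<^sup>2 + e / (tau * (M - K)))"
    using pos e_nonneg by (intro real_sqrt_le_mono) simp
  ultimately have gamma_ge: "2 * c \<le> gamma_u M K tau R T"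
    unfolding gamma_u_def Let_def e_def[symmetric] c_def[symmetric] by simp
  have "2 * c = (1 + K / tau) * (e / (M - K))" unfolding c_def using pos by (simp add: field_simps)
  also have "\<dots> = e / (M - K) + K / tau * (e / (M - K))"
    by (simp only: distrib_right mult_1_left)
  also have "\<dots> \<ge> e / (M - K)" using pos e_nonneg assms by simp
  finally have "e / (M - K) \<le> gamma_u M K tau R T" using gamma_ge by linarith
  moreover have "(2 powr (R / K) - 1) / (M - K) \<le> e / (M - K)"
    using e_ge pos by (simp add: divide_right_mono)
  ultimately show ?thesis by linarith
qed

lemma zeta_zf_le_csi_power:
  assumes "0 \<le> alpha" "0 \<le> rho_r" "0 \<le> rho_d" "0 \<le> rho_s" "0 < rho_0" "0 < R"
    and "1 \<le> K" "K \<le> tau" "tau < T" "K < M"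
  shows "zeta_zf M K tau R alpha rho_r rho_d rho_s rho_0 T
           \<le> R / (csi_power M K R alpha rho_r rho_d rho_s + 2 * rho_0)"
proof -
  have "alpha * K * ((2 powr (R / K) - 1) / (M - K)) \<le> alpha * K * gamma_u M K tau R T"
    using gamma_u_ge[of K tau T M R] assms by (intro mult_left_mono) auto
  moreover have "0 \<le> K * (8 * K\<^sup>2 * rho_0 / (3 * T))" "0 \<le> M * (4 * K\<^sup>2 * rho_0 / T)"
    using assms by simp_all
  moreover have "1 \<le> M * K" using assms mult_mono[of 1 M 1 K] by simp
  then have "2 * rho_0 \<le> M * (2 * K * rho_0)" using assms by (simp add: algebra_simps)
  ultimately have "csi_power M K R alpha rho_r rho_d rho_s + 2 * rho_0
      \<le> alpha * K * gamma_u M K tau R T + rho_s + K * (rho_d + 8 * K\<^sup>2 * rho_0 / (3 * T))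
         + M * (rho_r + 2 * K * rho_0 + 4 * K\<^sup>2 * rho_0 / T)"
    unfolding csi_power_def by (simp add: distrib_left)
  moreover have "0 < csi_power M K R alpha rho_r rho_d rho_s + 2 * rho_0"
    using csi_power_ge_rho_s[of K M R alpha rho_r rho_d rho_s] assms by simp
  ultimately show ?thesis unfolding zeta_zf_def using assms(6) by (simp add: frac_le)
qed

lemma zeta_csi_pos_le:
  assumes "0 \<le> alpha" "0 \<le> rho_r" "0 \<le> rho_d" "0 < rho_s" "0 < R" "0 < K" "K < M"
  shows "0 < zeta_csi M K R alpha rho_r rho_d rho_s" "zeta_csi M K R alpha rho_r rho_d rho_s \<le> R / rho_s"
proof -
  have "rho_s \<le> csi_power M K R alpha rho_r rho_d rho_s"
    using csi_power_ge_rho_s assms by simp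
  then show "0 < zeta_csi M K R alpha rho_r rho_d rho_s" "zeta_csi M K R alpha rho_r rho_d rho_s \<le> R / rho_s"
    using assms by (simp_all add: zeta_csi_eq_divide_csi_power frac_le)
qed

lemma zeta_zf_le_zeta_csi:
  assumes "0 \<le> alpha" "0 \<le> rho_r" "0 \<le> rho_d" "0 < rho_s" "0 < rho_0" "0 < R"
    and "1 \<le> K" "K \<le> tau" "tau < T" "K < M"
  defines "b \<equiv> zeta_csi M K R alpha rho_r rho_d rho_s"
  shows "zeta_zf M K tau R alpha rho_r rho_d rho_s rho_0 T \<le> b / (1 + 2 * rho_0 / R * b)"
proof -
  define P where "P = csi_power M K R alpha rho_r rho_d rho_s"
  have "0 < P" using csi_power_ge_rho_s[of K M R alpha rho_r rho_d rho_s] assms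
    unfolding P_def by fastforce
  then have "R / (P + 2 * rho_0) = (R / P) / (1 + 2 * rho_0 / R * (R / P))"
    using assms(6) by (simp add: divide_simps)
  then show ?thesis
    using zeta_zf_le_csi_power[of alpha rho_r rho_d rho_s rho_0 R K tau T M] assms
    unfolding b_def zeta_csi_eq_divide_csi_power P_def by simp
qed

theorem lemma8:
  fixes alpha rho_r rho_d rho_s rho_0 T R :: real
  assumes "alpha > 1" and "rho_r > 0" and "rho_d > 0" and "rho_s > 0" and "rho_0 > 0"
    and "T > 1" and "K_max T rho_r rho_d rho_0 > 10" and "R > 0"
  shows "zeta'_zf R alpha rho_r rho_d rho_s rho_0 T < zeta'_csi R alpha rho_r rho_d rho_s rho_0 T"
proof -
  define ZF where "ZF = {zeta_zf M K tau R alpha rho_r rho_d rho_s rho_0 T | M K tau.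
           1 \<le> K \<and> K \<le> K_max T rho_r rho_d rho_0 \<and> K \<le> tau \<and> tau < T \<and> M > K}"
  define CSI where "CSI = {zeta_csi M K R alpha rho_r rho_d rho_s | M K.
           1 \<le> K \<and> K \<le> K_max T rho_r rho_d rho_0 \<and> M > K}"
  have "Sup ZF < Sup CSI"
  proof (rule Sup_less_Sup_if_dominated[where c = "2 * rho_0 / R"])
    show "ZF \<noteq> {}" unfolding ZF_def using assms(6,7) by force
    show "bdd_above CSI" unfolding CSI_def
      by (rule bdd_aboveI[where M = "R / rho_s"]) (use assms zeta_csi_pos_le(2) in force)
    show "0 < 2 * rho_0 / R" using assms by simp
  next
    fix a assume "a \<in> ZF"
    then obtain M K tau where a: "a = zeta_zf M K tau R alpha rho_r rho_d rho_s rho_0 T"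
      and feasible: "1 \<le> K" "K \<le> K_max T rho_r rho_d rho_0" "K \<le> tau" "tau < T" "M > K"
      unfolding ZF_def by blast
    have "zeta_csi M K R alpha rho_r rho_d rho_s \<in> CSI" unfolding CSI_def using feasible by blast
    moreover have "0 < zeta_csi M K R alpha rho_r rho_d rho_s"
      using zeta_csi_pos_le(1) feasible assms by simp
    moreover have "a \<le> zeta_csi M K R alpha rho_r rho_d rho_s
        / (1 + 2 * rho_0 / R * zeta_csi M K R alpha rho_r rho_d rho_s)"
      unfolding a using zeta_zf_le_zeta_csi feasible assms by simp
    ultimately show "\<exists>b\<in>CSI. b > 0 \<and> a \<le> b / (1 + 2 * rho_0 / R * b)" by blast
  qed
  then show ?thesis unfolding zeta'_zf_def zeta'_csi_def ZF_def CSI_def .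
qed

end
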